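(* The advised language family $\mathrm{1QFA}/n$ does not satisfy the partial order condition; specifically, the language $L_a=\{wa\mid w\in\{a,b\}^*\}$ over $\Sigma=\{a,b\}$, which violates the partial order condition, belongs to $\mathrm{1QFA}/n$.
   Context: A 1qfa is a one-way measure-many quantum finite automaton (input between endmarkers $\cent$ and $\$$, one unitary per scanned symbol followed by a projection measurement onto accepting/rejecting/non-halting subspaces at every step). For equal-length strings $x\in\Sigma^n,y\in\Gamma^n$, $\genfrac{[}{]}{0pt}{}{x}{y}$ is the two-track string with $x$ on the upper track and $y$ on the lower track. $\mathrm{1QFA}/n$ is the family of languages $L$ for which there exist a 1qfa $M$, $\varepsilon\in[0,1/2)$, an advice alphabet $\Gamma$ and an advice function $h:\mathbb{N}\to\Gamma^*$ with $|h(n)|=n$ such that $M$ on input $\genfrac{[}{]}{0pt}{}{x}{h(|x|)}$ outputs $L(x)$ (1 if $x\in L$, 0 otherwise) with probability at least $1-\varepsilon$ for every $x$. A language satisfies the partial order condition (Brodsky–Pippenger) exactly when its minimal deterministic finite automaton (with transition function extended to strings $\hat\delta$) contains no two inner states $q_1,q_2$ such that (i) there is a string $z$ with $\hat\delta(q_1,z)$ accepting and $\hat\delta(q_2,z)$ not accepting or vice versa, and (ii) there are nonempty strings $x,y$ with $\hat\delta(q_1,x)=\hat\delta(q_2,x)=q_2$ and $\hat\delta(q_2,y)=q_1$. Every language recognized by a bounded-error 1qfa without advice satisfies this condition. *)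

theory Defs
  imports Complex_Main
begin

datatype ab = a | b

definition La :: "ab list set" where
  "La = {w @ [a] | w. True}"

text \<open>The minimal (complete, reachable) DFA of L is realised by Myhill--Nerode:
  its states are the left quotients u\<inverse>L, the transition on a string x maps
  u\<inverse>L to (ux)\<inverse>L, and u\<inverse>L is accepting iff the empty word belongs to it.
  Hence hat-delta(q,z) is accepting iff z belongs to the quotient q.\<close>

definition lquot :: "'s list set \<Rightarrow> 's list \<Rightarrow> 's list set" where
  "lquot L u = {z. u @ z \<in> L}"

definition partial_order_condition :: "'s list set \<Rightarrow> bool" where
  "partial_order_condition L \<longleftrightarrow>
     \<not> (\<exists>u1 u2.
           (\<exists>z. (z \<in> lquot L u1) \<noteq> (z \<in> lquot L u2)) \<and>
           (\<exists>x y. x \<noteq> [] \<and> y \<noteq> [] \<and>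
              lquot L (u1 @ x) = lquot L u2 \<and>
              lquot L (u2 @ x) = lquot L u2 \<and>
              lquot L (u2 @ y) = lquot L u1))"

datatype 'c tsym = Cent | Dollar | Sym 'c

record 'c qfa =
  dim :: nat
  trans :: "'c tsym \<Rightarrow> nat \<Rightarrow> nat \<Rightarrow> complex"
  init :: nat
  accs :: "nat set"
  rejs :: "nat set"

definition unitary_mat :: "nat \<Rightarrow> (nat \<Rightarrow> nat \<Rightarrow> complex) \<Rightarrow> bool" where
  "unitary_mat d U \<longleftrightarrow>
     (\<forall>i<d. \<forall>k<d. (\<Sum>j<d. cnj (U j i) * U j k) = (if i = k then 1 else 0))"

definition wf_qfa :: "'c qfa \<Rightarrow> bool" where
  "wf_qfa M \<longleftrightarrow> init M < dim M \<and> accs M \<subseteq> {..<dim M} \<and> rejs M \<subseteq> {..<dim M}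
     \<and> accs M \<inter> rejs M = {} \<and> (\<forall>s. unitary_mat (dim M) (trans M s))"

definition nonhalt :: "'c qfa \<Rightarrow> nat set" where
  "nonhalt M = {..<dim M} - accs M - rejs M"

definition mat_app :: "nat \<Rightarrow> (nat \<Rightarrow> nat \<Rightarrow> complex) \<Rightarrow> (nat \<Rightarrow> complex) \<Rightarrow> (nat \<Rightarrow> complex)" where
  "mat_app d U v = (\<lambda>i. \<Sum>j<d. U i j * v j)"

definition proj :: "nat set \<Rightarrow> (nat \<Rightarrow> complex) \<Rightarrow> (nat \<Rightarrow> complex)" where
  "proj S v = (\<lambda>i. if i \<in> S then v i else 0)"

definition nsq :: "nat \<Rightarrow> (nat \<Rightarrow> complex) \<Rightarrow> real" where
  "nsq d v = (\<Sum>i<d. (cmod (v i))\<^sup>2)"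

text \<open>One step: apply the unitary of the scanned symbol, then measure. The
  configuration records the unnormalised non-halting state and the accumulated
  acceptance and rejection probabilities.\<close>

definition qstep :: "'c qfa \<Rightarrow> 'c tsym \<Rightarrow> (nat \<Rightarrow> complex) \<times> real \<times> real
                     \<Rightarrow> (nat \<Rightarrow> complex) \<times> real \<times> real" where
  "qstep M s cfg = (case cfg of (psi, pa, pr) \<Rightarrow>
     (let phi = mat_app (dim M) (trans M s) psi
      in (proj (nonhalt M) phi, pa + nsq (dim M) (proj (accs M) phi),
          pr + nsq (dim M) (proj (rejs M) phi))))"

definition qrun :: "'c qfa \<Rightarrow> 'c list \<Rightarrow> (nat \<Rightarrow> complex) \<times> real \<times> real" where
  "qrun M w = fold (qstep M) (Cent # map Sym w @ [Dollar])
                 ((\<lambda>i. if i = init M then 1 else 0), 0, 0)"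

definition acc_prob :: "'c qfa \<Rightarrow> 'c list \<Rightarrow> real" where
  "acc_prob M w = fst (snd (qrun M w))"

definition rej_prob :: "'c qfa \<Rightarrow> 'c list \<Rightarrow> real" where
  "rej_prob M w = snd (snd (qrun M w))"

text \<open>The advice alphabet is a finite set of natural numbers (any finite
  alphabet can be encoded so). The two-track input [x; h(|x|)] is zip x (h |x|).\<close>

definition QFA_n :: "'s list set set" where
  "QFA_n = {L. \<exists>(M :: ('s \<times> nat) qfa) (eps :: real) (Gamma :: nat set) (h :: nat \<Rightarrow> nat list).
      wf_qfa M \<and> 0 \<le> eps \<and> eps < 1/2 \<and> finite Gamma \<and>
      (\<forall>n. length (h n) = n \<and> set (h n) \<subseteq> Gamma) \<and>
      (\<forall>x. (x \<in> L \<longrightarrow> acc_prob M (zip x (h (length x))) \<ge> 1 - eps) \<and>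
           (x \<notin> L \<longrightarrow> rej_prob M (zip x (h (length x))) \<ge> 1 - eps))}"

end

theory Submission
  imports Defs "HOL-Combinatorics.Transposition"
begin

text \<open>The quotients \<open>[a]\<inverse>La\<close> and \<open>[]\<inverse>La\<close> differ on the empty word, yet reading \<open>b\<close>
  sends both to \<open>[]\<inverse>La\<close> and reading \<open>a\<close> sends \<open>[]\<inverse>La\<close> back to \<open>[a]\<inverse>La\<close>; this cycle
  violates the partial order condition.  With advice, however, \<open>La\<close> is easy: the
  advice string marks the last input position, and a 1qfa whose unitaries are
  permutation matrices idles on unmarked positions and, at the marked one, accepts
  iff it reads \<open>a\<close>.  The right endmarker is reached unhalted only on the empty
  input, where it rejects.\<close>

lemma mem_La_iff: "w \<in> La \<longleftrightarrow> w \<noteq> [] \<and> last w = a"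
proof
  assume "w \<in> La"
  then show "w \<noteq> [] \<and> last w = a" unfolding La_def by auto
next
  assume "w \<noteq> [] \<and> last w = a"
  then have "w = butlast w @ [a]" by (metis append_butlast_last_id)
  then show "w \<in> La" unfolding La_def by blast
qed

lemma lquot_La_snoc_b: "lquot La (u @ [b]) = lquot La []"
  unfolding lquot_def by (auto simp: mem_La_iff)

lemma not_partial_order_condition_La: "\<not> partial_order_condition La"
proof -
  have "([] \<in> lquot La [a]) \<noteq> ([] \<in> lquot La [])"
    by (simp add: lquot_def mem_La_iff)
  moreover have "lquot La ([a] @ [b]) = lquot La []" and "lquot La ([] @ [b]) = lquot La []"
    using lquot_La_snoc_b[of "[a]"] lquot_La_snoc_b[of "[]"] by simp_all
  moreover have "lquot La ([] @ [a]) = lquot La [a]" by simp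
  ultimately show ?thesis
    unfolding partial_order_condition_def not_not by blast
qed

definition perm_mat :: "(nat \<Rightarrow> nat) \<Rightarrow> nat \<Rightarrow> nat \<Rightarrow> complex" where
  "perm_mat p i j = (if i = p j then 1 else 0)"

definition basis_vec :: "nat \<Rightarrow> nat \<Rightarrow> complex" where
  "basis_vec i = (\<lambda>j. if j = i then 1 else 0)"

lemma unitary_mat_perm_mat:
  assumes "bij_betw p {..<d} {..<d}"
  shows "unitary_mat d (perm_mat p)"
  unfolding unitary_mat_def
proof (intro allI impI)
  fix i k assume "i < d" "k < d"
  then have "(\<Sum>j<d. cnj (perm_mat p j i) * perm_mat p j k)
             = (\<Sum>j<d. if j = p i then (if p i = p k then 1 else 0) else 0)"
    by (intro sum.cong) (auto simp: perm_mat_def)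
  also have "\<dots> = (if p i = p k then 1 else 0)"
    using bij_betwE[OF assms] \<open>i < d\<close> by simp
  also have "\<dots> = (if i = k then 1 else 0)"
    using assms \<open>i < d\<close> \<open>k < d\<close> by (auto dest: bij_betw_imp_inj_on inj_onD)
  finally show "(\<Sum>j<d. cnj (perm_mat p j i) * perm_mat p j k) = (if i = k then 1 else 0)" .
qed

lemma mat_app_perm_mat_basis_vec:
  "i < d \<Longrightarrow> mat_app d (perm_mat p) (basis_vec i) = basis_vec (p i)"
  unfolding mat_app_def basis_vec_def fun_eq_iff
  by (simp add: perm_mat_def if_distrib[of "\<lambda>x. _ * x"] cong: if_cong)

lemma proj_basis_vec: "proj S (basis_vec i) = (if i \<in> S then basis_vec i else (\<lambda>_. 0))"
  by (auto simp: proj_def basis_vec_def)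

lemma nsq_basis_vec: "nsq d (basis_vec i) = (if i < d then 1 else 0)"
  by (simp add: nsq_def basis_vec_def if_distrib[of "\<lambda>x. (cmod x)\<^sup>2"] cong: if_cong)

lemma nsq_zero: "nsq d (\<lambda>_. 0) = 0"
  by (simp add: nsq_def)

lemma qstep_basis_vec:
  assumes "mat_app (dim M) (trans M s) (basis_vec i) = basis_vec j" and "j < dim M"
  shows "qstep M s (basis_vec i, pa, pr) =
    (if j \<in> nonhalt M then basis_vec j else (\<lambda>_. 0),
     pa + (if j \<in> accs M then 1 else 0), pr + (if j \<in> rejs M then 1 else 0))"
  using assms by (simp add: qstep_def proj_basis_vec nsq_basis_vec nsq_zero)

lemma qstep_zero: "qstep M s ((\<lambda>_. 0), pa, pr) = ((\<lambda>_. 0), pa, pr)"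
proof -
  have "mat_app (dim M) (trans M s) (\<lambda>_. 0) = (\<lambda>_. 0)" by (simp add: mat_app_def)
  then show ?thesis by (simp add: qstep_def proj_def nsq_zero)
qed

fun swap_target :: "(ab \<times> nat) tsym \<Rightarrow> nat" where
  "swap_target Cent = 0"
| "swap_target Dollar = 2"
| "swap_target (Sym (c, g)) = (if g = 1 then (if c = a then 1 else 2) else 0)"

definition La_qfa :: "(ab \<times> nat) qfa" where
  "La_qfa = \<lparr>dim = 3, trans = \<lambda>s. perm_mat (transpose 0 (swap_target s)),
             init = 0, accs = {1}, rejs = {2}\<rparr>"

lemma swap_target_less_3: "swap_target s < 3"
  by (induction s rule: swap_target.induct) auto

lemma wf_La_qfa: "wf_qfa La_qfa"
  unfolding wf_qfa_def La_qfa_def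
  using swap_target_less_3 by (auto intro!: unitary_mat_perm_mat)

lemma nonhalt_La_qfa: "nonhalt La_qfa = {0}"
  unfolding nonhalt_def La_qfa_def by auto

lemma qstep_La_qfa_basis_vec_0:
  "qstep La_qfa s (basis_vec 0, pa, pr) =
     (case swap_target s of
        0 \<Rightarrow> (basis_vec 0, pa, pr)
      | Suc 0 \<Rightarrow> ((\<lambda>_. 0), pa + 1, pr)
      | _ \<Rightarrow> ((\<lambda>_. 0), pa, pr + 1))"
proof -
  have "mat_app (dim La_qfa) (trans La_qfa s) (basis_vec 0) = basis_vec (swap_target s)"
    by (simp add: La_qfa_def mat_app_perm_mat_basis_vec)
  then have "qstep La_qfa s (basis_vec 0, pa, pr) =
      (if swap_target s \<in> nonhalt La_qfa then basis_vec (swap_target s) else (\<lambda>_. 0),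
       pa + (if swap_target s \<in> accs La_qfa then 1 else 0),
       pr + (if swap_target s \<in> rejs La_qfa then 1 else 0))"
    using swap_target_less_3[of s] by (simp add: qstep_basis_vec La_qfa_def)
  moreover have "swap_target s = 0 \<or> swap_target s = 1 \<or> swap_target s = 2"
    using swap_target_less_3[of s] by linarith
  ultimately show ?thesis
    unfolding nonhalt_La_qfa by (auto simp: La_qfa_def)
qed

definition mark_last :: "nat \<Rightarrow> nat list" where
  "mark_last n = (if n = 0 then [] else replicate (n - 1) 0 @ [1])"

lemma fold_qstep_La_qfa_unmarked:
  "fold (qstep La_qfa) (map Sym (zip w (replicate (length w) 0))) (basis_vec 0, pa, pr)
     = (basis_vec 0, pa, pr)"
  by (induction w) (simp_all add: qstep_La_qfa_basis_vec_0)

lemma init_basis_vec_La_qfa: "(\<lambda>i. if i = init La_qfa then 1 else 0) = basis_vec 0"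
  by (simp add: La_qfa_def basis_vec_def)

lemma qrun_La_qfa_Nil: "qrun La_qfa (zip [] (mark_last 0)) = ((\<lambda>_. 0), 0, 1)"
  by (simp add: qrun_def init_basis_vec_La_qfa qstep_La_qfa_basis_vec_0)

lemma qrun_La_qfa_snoc:
  "qrun La_qfa (zip (w @ [c]) (mark_last (length (w @ [c])))) =
     (if c = a then ((\<lambda>_. 0), 1, 0) else ((\<lambda>_. 0), 0, 1))"
proof -
  have "zip (w @ [c]) (mark_last (length (w @ [c]))) = zip w (replicate (length w) 0) @ [(c, 1)]"
    by (simp add: mark_last_def)
  then show ?thesis
    unfolding qrun_def init_basis_vec_La_qfa
    by (cases c) (simp_all add: fold_qstep_La_qfa_unmarked qstep_La_qfa_basis_vec_0 qstep_zero)
qed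

lemma La_qfa_decides_La:
  "(x \<in> La \<longrightarrow> acc_prob La_qfa (zip x (mark_last (length x))) = 1) \<and>
   (x \<notin> La \<longrightarrow> rej_prob La_qfa (zip x (mark_last (length x))) = 1)"
proof (cases x rule: rev_cases)
  case Nil
  then show ?thesis using qrun_La_qfa_Nil by (simp add: mem_La_iff rej_prob_def)
next
  case (snoc w c)
  then show ?thesis using qrun_La_qfa_snoc[of w c]
    by (cases c) (simp_all add: mem_La_iff acc_prob_def rej_prob_def)
qed

lemma La_in_QFA_n: "La \<in> QFA_n"
  unfolding QFA_n_def mem_Collect_eq
proof (intro exI[of _ La_qfa] exI[of _ "0::real"] exI[of _ "{0::nat, 1}"] exI[of _ mark_last]
    conjI allI)
  fix n show "length (mark_last n) = n" and "set (mark_last n) \<subseteq> {0, 1}"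
    by (auto simp: mark_last_def)
next
  fix x :: "ab list"
  show "x \<in> La \<longrightarrow> 1 - 0 \<le> acc_prob La_qfa (zip x (mark_last (length x)))"
   and "x \<notin> La \<longrightarrow> 1 - 0 \<le> rej_prob La_qfa (zip x (mark_last (length x)))"
    using La_qfa_decides_La[of x] by auto
qed (simp_all add: wf_La_qfa)

theorem lemma3p3:
  shows "\<not> partial_order_condition La \<and> La \<in> QFA_n"
  using not_partial_order_condition_La La_in_QFA_n by blast

end
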